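(* Let $C_\bullet(\theta)$ be the chain complex with $C_n(\theta)=\mathrm{id}_{\mathcal O}\otimes_R B_+^{\otimes_R n}\otimes_R\mathrm{id}_L$ and differential $d(a_1\otimes\cdots\otimes a_n)=\sum_{i=1}^{n-1}(-1)^i a_1\otimes\cdots\otimes a_ia_{i+1}\otimes\cdots\otimes a_n$, and $C_\bullet^{(m)}(\theta)$ its subcomplex of internal degree $m$. Then for all $n\ge1$: $H_n(C_\bullet^{(n-1)}(\theta))\cong k$ for $n\in\{1,2\}$ and $0$ otherwise; $H_n(C_\bullet^{(n-2)}(\theta))\cong k$ for $n\in\{5,6\}$ and $0$ otherwise; $H_n(C_\bullet^{(n-3)}(\theta))\cong k$ for $n\in\{9,10\}$ and $0$ otherwise; $H_n(C_\bullet^{(n-4)}(\theta))\cong k$ for $n\in\{13,14\}$ and $0$ otherwise.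
   Context: Let $k$ be a field with $\operatorname{char}k\neq2,3$. Let $B$ be the graded $k$-algebra with $k$-basis $\mathrm{id}_L,\mathrm{id}_{\mathcal O},\theta$ (degree $0$) and $\eta,\xi,\xi_L$ (degree $1$), whose only nonzero products of basis elements are $\mathrm{id}_L\mathrm{id}_L=\mathrm{id}_L$, $\mathrm{id}_{\mathcal O}\mathrm{id}_{\mathcal O}=\mathrm{id}_{\mathcal O}$, $\mathrm{id}_L\xi_L=\xi_L\mathrm{id}_L=\xi_L$, $\mathrm{id}_{\mathcal O}\xi=\xi\mathrm{id}_{\mathcal O}=\xi$, $\mathrm{id}_L\eta=\eta\,\mathrm{id}_{\mathcal O}=\eta$, $\mathrm{id}_{\mathcal O}\theta=\theta\,\mathrm{id}_L=\theta$, $\theta\eta=\xi$, $\eta\theta=\xi_L$. Let $R=k\langle\mathrm{id}_L,\mathrm{id}_{\mathcal O}\rangle$ and $B_+=\langle\theta,\eta,\xi,\xi_L\rangle$; tensor products are over $R$. Thus $B_+^{\otimes_R n}$ has $k$-basis the words $a_1\otimes\cdots\otimes a_n$, $a_i\in\{\theta,\eta,\xi,\xi_L\}$, with the right idempotent of $a_i$ equal to the left idempotent of $a_{i+1}$, where (left, right) idempotents are $\theta:(\mathrm{id}_{\mathcal O},\mathrm{id}_L)$, $\eta:(\mathrm{id}_L,\mathrm{id}_{\mathcal O})$, $\xi:(\mathrm{id}_{\mathcal O},\mathrm{id}_{\mathcal O})$, $\xi_L:(\mathrm{id}_L,\mathrm{id}_L)$; $\mathrm{id}_{\mathcal O}\otimes(\cdot)\otimes\mathrm{id}_L$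 selects words whose first letter has left idempotent $\mathrm{id}_{\mathcal O}$ and last letter right idempotent $\mathrm{id}_L$. Internal degree of a word is the sum of the degrees of its letters. *)

theory Defs
  imports Complex_Main "HOL-Library.Function_Algebras"
begin

text \<open>The two idempotents of R and the four basis letters of B_+.\<close>
datatype idem = IdL | IdO
datatype letter = Theta | Eta | Xi | XiL

fun lidem :: "letter \<Rightarrow> idem" where
  "lidem Theta = IdO" | "lidem Eta = IdL" | "lidem Xi = IdO" | "lidem XiL = IdL"

fun ridem :: "letter \<Rightarrow> idem" where
  "ridem Theta = IdL" | "ridem Eta = IdO" | "ridem Xi = IdO" | "ridem XiL = IdL"

fun ldeg :: "letter \<Rightarrow> nat" where
  "ldeg Theta = 0" | "ldeg Eta = 1" | "ldeg Xi = 1" | "ldeg XiL = 1"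

text \<open>Product of two letters in B_+ (None = zero): theta eta = xi, eta theta = xi_L.\<close>
fun lmult :: "letter \<Rightarrow> letter \<Rightarrow> letter option" where
  "lmult Theta Eta = Some Xi"
| "lmult Eta Theta = Some XiL"
| "lmult _ _ = None"

text \<open>Words a_1 ... a_n forming a basis element of B_+^{tensor_R n} (composable).\<close>
definition composable :: "letter list \<Rightarrow> bool" where
  "composable w \<longleftrightarrow> (\<forall>i. Suc i < length w \<longrightarrow> ridem (w ! i) = lidem (w ! Suc i))"

definition wdeg :: "letter list \<Rightarrow> nat" where
  "wdeg w = sum_list (map ldeg w)"

text \<open>Basis of C_n^{(m)}(theta) = id_O (B_+)^{tensor n} id_L in internal degree m.
  (For n = 0 this is id_O R id_L = 0, i.e. the empty basis.)\<close>
definition cbasis :: "nat \<Rightarrow> nat \<Rightarrow> letter list set" where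
  "cbasis n m = {w. length w = n \<and> w \<noteq> [] \<and> composable w \<and>
                    lidem (hd w) = IdO \<and> ridem (last w) = IdL \<and> wdeg w = m}"

text \<open>Contraction of the letters at positions i, i+1 (1-based), if the product is nonzero.\<close>
definition contract :: "letter list \<Rightarrow> nat \<Rightarrow> letter list option" where
  "contract w i = (case lmult (w ! (i - 1)) (w ! i) of
                     None \<Rightarrow> None
                   | Some c \<Rightarrow> Some (take (i - 1) w @ [c] @ drop (i + 1) w))"

definition dcoef :: "letter list \<Rightarrow> letter list \<Rightarrow> 'k::field" where
  "dcoef w u = (\<Sum>i\<in>{1..<length w}. (if contract w i = Some u then (-1) ^ i else 0))"

definition chains :: "nat \<Rightarrow> nat \<Rightarrow> (letter list \<Rightarrow> 'k::field) set" where
  "chains n m = {f. \<forall>w. f w \<noteq> 0 \<longrightarrow> w \<in> cbasis n m}"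

definition dif :: "nat \<Rightarrow> nat \<Rightarrow> (letter list \<Rightarrow> 'k::field) \<Rightarrow> (letter list \<Rightarrow> 'k)" where
  "dif n m f = (\<lambda>u. \<Sum>w\<in>cbasis n m. f w * dcoef w u)"

definition fscale :: "'k::field \<Rightarrow> (letter list \<Rightarrow> 'k) \<Rightarrow> (letter list \<Rightarrow> 'k)" where
  "fscale c f = (\<lambda>w. c * f w)"

lemma vector_space_fscale: "vector_space fscale"
  by unfold_locales (simp_all add: fscale_def fun_eq_iff plus_fun_def algebra_simps)

definition cycles :: "nat \<Rightarrow> nat \<Rightarrow> (letter list \<Rightarrow> 'k::field) set" where
  "cycles n m = {f \<in> chains n m. dif n m f = 0}"

definition boundaries :: "nat \<Rightarrow> nat \<Rightarrow> (letter list \<Rightarrow> 'k::field) set" where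
  "boundaries n m = dif (Suc n) m ` chains (Suc n) m"

text \<open>dim_k H_n(C^{(m)}(theta)) = dim Z_n - dim B_n (all spaces are finite-dimensional
  and B_n is a subspace of Z_n).\<close>
definition homology_dim :: "'k::field itself \<Rightarrow> nat \<Rightarrow> nat \<Rightarrow> nat" where
  "homology_dim TYPE('k) n m =
     vector_space.dim (fscale :: 'k \<Rightarrow> _) (cycles n m :: (letter list \<Rightarrow> 'k) set)
     - vector_space.dim (fscale :: 'k \<Rightarrow> _) (boundaries n m :: (letter list \<Rightarrow> 'k) set)"

end

theory Submission
  imports Defs
begin

(* Call theta and eta "arrows" and xi = theta eta, xi_L = eta theta "loops"; a loop
   counts as two arrows.  A basis word of C_n^(m)(theta) is a composable word of n letters, starting
   at id_O, made of 2m+1 arrows.  We therefore study the more general complexes G(s,L) spanned by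
   composable words starting at the idempotent s with L arrows in total (graded by word length).

   Every word of G(s,L) with L >= 3 and length n >= 2 starts either with a loop, or with two arrows,
   or with an arrow followed by a loop.  Contracting the two initial arrows to a loop pairs the first
   two kinds of words acyclically, while the third kind is a copy of G(opp s, L-3) shifted by two.
   Hence H_n(G(s,L)) = H_(n-2)(G(opp s, L-3)).  Together with the small complexes L <= 2 this shows
   that H_n(G(s,L)) is one-dimensional if 2L + (n mod 2) = 3n and zero otherwise, over any field. *)

section \<open>Letters as arrows and loops\<close>

fun opp :: "idem \<Rightarrow> idem" where "opp IdL = IdO" | "opp IdO = IdL"
fun arrow :: "idem \<Rightarrow> letter" where "arrow IdO = Theta" | "arrow IdL = Eta"
fun loop :: "idem \<Rightarrow> letter" where "loop IdO = Xi" | "loop IdL = XiL"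

fun alen :: "letter \<Rightarrow> nat" where
  "alen Theta = 1" | "alen Eta = 1" | "alen Xi = 2" | "alen XiL = 2"

definition walen :: "letter list \<Rightarrow> nat" where "walen w = sum_list (map alen w)"

lemma walen_Nil[simp]: "walen [] = 0" and walen_Cons[simp]: "walen (x # r) = alen x + walen r"
  by (simp_all add: walen_def)

lemma opp_opp[simp]: "opp (opp s) = s" by (cases s) auto
lemma lidem_arrow[simp]: "lidem (arrow s) = s" by (cases s) auto
lemma ridem_arrow[simp]: "ridem (arrow s) = opp s" by (cases s) auto
lemma lidem_loop[simp]: "lidem (loop s) = s" by (cases s) auto
lemma ridem_loop[simp]: "ridem (loop s) = s" by (cases s) auto
lemma alen_arrow[simp]: "alen (arrow s) = 1" by (cases s) auto
lemma alen_loop[simp]: "alen (loop s) = 2" by (cases s) auto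
lemma arrow_ne_loop[simp]: "arrow s \<noteq> loop t" "loop t \<noteq> arrow s" by (cases s; cases t; auto)+

lemma alen_pos: "1 \<le> alen x" by (cases x) auto
lemma arrow_of_alen: "alen x = 1 \<Longrightarrow> x = arrow (lidem x)" by (cases x) auto
lemma loop_of_alen: "alen x = 2 \<Longrightarrow> x = loop (lidem x)" by (cases x) auto

lemma letter_at: "lidem x = s \<Longrightarrow> x = arrow s \<or> x = loop s"
  by (cases x; cases s; auto)

lemma lmult_arrows[simp]: "lmult (arrow s) (arrow (opp s)) = Some (loop s)" by (cases s) auto
lemma lmult_loop_left[simp]: "lmult (loop s) y = None" by (cases s; cases y; auto)
lemma lmult_loop_right[simp]: "lmult x (loop s) = None" by (cases s; cases x; auto)

lemma lmult_not_left[simp]: "lmult x y \<noteq> Some x" by (cases x; cases y; auto)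

lemma lmult_SomeD: "lmult x y = Some c \<Longrightarrow> \<exists>s. x = arrow s \<and> y = arrow (opp s) \<and> c = loop s"
  by (cases x; cases y) (auto intro: exI[of _ IdO] exI[of _ IdL])

lemma composable_Nil[simp]: "composable []" and composable_single[simp]: "composable [x]"
  by (simp_all add: composable_def)

lemma composable_Cons:
  "composable (x # r) \<longleftrightarrow> (r \<noteq> [] \<longrightarrow> ridem x = lidem (hd r)) \<and> composable r"
proof
  assume H: "composable (x # r)"
  have "r \<noteq> [] \<longrightarrow> ridem x = lidem (hd r)"
    using H unfolding composable_def by (auto simp: hd_conv_nth elim!: allE[of _ 0])
  moreover have "composable r" unfolding composable_def
  proof (intro allI impI)
    fix i assume "Suc i < length r"
    then show "ridem (r ! i) = lidem (r ! Suc i)"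
      using H unfolding composable_def by (auto elim!: allE[of _ "Suc i"])
  qed
  ultimately show "(r \<noteq> [] \<longrightarrow> ridem x = lidem (hd r)) \<and> composable r" by blast
next
  assume "(r \<noteq> [] \<longrightarrow> ridem x = lidem (hd r)) \<and> composable r"
  then show "composable (x # r)"
    unfolding composable_def by (auto simp: hd_conv_nth nth_Cons split: nat.split)
qed

lemma walen_bounds: "length w \<le> walen w \<and> walen w \<le> 2 * length w"
proof (induction w)
  case (Cons x w) then show ?case by (cases x) auto
qed simp

text \<open>A composable word alternates between the idempotents arrow by arrow; its internal degree
  counts the arrows leaving id_L.  So both are determined by the start and the arrow count.\<close>
lemma composable_word_shape:
  assumes "composable w" "w \<noteq> []"
  shows "ridem (last w) = (if even (walen w) then lidem (hd w) else opp (lidem (hd w)))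
    \<and> wdeg w = (walen w + (if lidem (hd w) = IdL then 1 else 0)) div 2"
  using assms
proof (induction w)
  case (Cons x r)
  show ?case
  proof (cases "r = []")
    case True then show ?thesis by (cases x) (auto simp: wdeg_def)
  next
    case False
    have "ridem x = lidem (hd r)" "composable r" using Cons.prems False by (auto simp: composable_Cons)
    with Cons.IH False show ?thesis by (cases x) (auto simp: wdeg_def)
  qed
qed simp

section \<open>The differential on words\<close>

lemma contract_first: "contract (x # y # r) (Suc 0) = map_option (\<lambda>c. c # r) (lmult x y)"
  by (simp add: contract_def split: option.split)

lemma contract_Suc: "1 \<le> i \<Longrightarrow> contract (x # w) (Suc i) = map_option (Cons x) (contract w i)"
  by (cases i) (auto simp: contract_def split: option.split)

definition dhead :: "letter \<Rightarrow> letter list \<Rightarrow> letter list \<Rightarrow> 'k::field" where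
  "dhead x w u = (case w of [] \<Rightarrow> 0
     | y # r \<Rightarrow> (case lmult x y of None \<Rightarrow> 0 | Some c \<Rightarrow> if u = c # r then -1 else 0))"

definition prefixed :: "letter \<Rightarrow> (letter list \<Rightarrow> 'k::field) \<Rightarrow> letter list \<Rightarrow> 'k" where
  "prefixed x F u = (case u of [] \<Rightarrow> 0 | y # u' \<Rightarrow> if y = x then F u' else 0)"

lemma prefixed_zero[simp]: "prefixed x (\<lambda>_. 0) u = 0"
  by (simp add: prefixed_def split: list.split)

lemma dcoef_short: "length w \<le> 1 \<Longrightarrow> dcoef w u = 0"
  by (simp add: dcoef_def)

lemma dcoef_Nil[simp]: "dcoef [] = (\<lambda>_. 0)" and dcoef_single[simp]: "dcoef [x] = (\<lambda>_. 0)"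
  by (simp_all add: fun_eq_iff dcoef_short)

lemma dcoef_Cons: "(dcoef (x # w) u :: 'k::field) = dhead x w u - prefixed x (dcoef w) u"
proof (cases w)
  case Nil then show ?thesis by (simp add: dcoef_short dhead_def)
next
  case (Cons y r)
  let ?later = "\<Sum>i\<in>{1..<length (y # r)}.
      (if contract (x # y # r) (Suc i) = Some u then (-1) ^ Suc i else 0 :: 'k)"
  have "(dcoef (x # y # r) u :: 'k) = (if contract (x # y # r) 1 = Some u then -1 else 0) + ?later"
    by (simp add: dcoef_def sum.atLeast_Suc_lessThan sum.shift_bounds_Suc_ivl del: sum.op_ivl_Suc)
  also have "?later = (\<Sum>i\<in>{1..<length (y # r)}.
      - prefixed x (\<lambda>u'. if contract (y # r) i = Some u' then (-1) ^ i else 0) u)"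
    by (rule sum.cong) (auto simp: contract_Suc prefixed_def split: list.split)
  also have "\<dots> = - prefixed x (dcoef (y # r)) u"
    by (auto simp: dcoef_def prefixed_def sum_negf split: list.split)
  finally show ?thesis
    using Cons by (auto simp: contract_first dhead_def split: option.split)
qed

text \<open>A common first letter can only survive in contractions at later positions.\<close>
lemma dcoef_same_head: "(dcoef (x # w) (x # u) :: 'k::field) = - dcoef w u"
  by (auto simp: dcoef_Cons dhead_def prefixed_def split: list.split option.split)

lemma dhead_loop[simp]: "dhead (loop s) r u = 0"
  by (simp add: dhead_def split: list.split)

fun dterms :: "letter list \<Rightarrow> (letter list \<times> int) list" where
  "dterms (x # y # r) = (case lmult x y of Some c \<Rightarrow> [(c # r, -1)] | None \<Rightarrow> [])
     @ map (\<lambda>(v, e). (x # v, - e)) (dterms (y # r))"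
| "dterms _ = []"

definition dsum :: "(letter list \<times> int) list \<Rightarrow> letter list \<Rightarrow> 'k::field" where
  "dsum ts u = sum_list (map (\<lambda>(v, e). if v = u then of_int e else 0) ts)"

lemma dsum_Nil[simp]: "dsum [] u = 0" by (simp add: dsum_def)
lemma dsum_append[simp]: "dsum (ts @ ts') u = dsum ts u + dsum ts' u" by (simp add: dsum_def)
lemma dsum_prefix: "dsum (map (\<lambda>(v, e). (x # v, - e)) ts) u = - prefixed x (dsum ts) u"
  by (induction ts) (auto simp: dsum_def prefixed_def split: list.split)

lemma dcoef_dterms: "(dcoef w u :: 'k::field) = dsum (dterms w) u"
proof (induction w arbitrary: u rule: dterms.induct)
  case (1 x y r)
  then have IH: "(dcoef (y # r) :: _ \<Rightarrow> 'k) = dsum (dterms (y # r))" by (simp add: fun_eq_iff)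
  have "(dsum (dterms (x # y # r)) u :: 'k)
      = dsum (case lmult x y of Some c \<Rightarrow> [(c # r, -1)] | None \<Rightarrow> []) u
        - prefixed x (dsum (dterms (y # r))) u"
    by (simp only: dterms.simps dsum_append dsum_prefix) simp
  then show ?case
    by (auto simp: dcoef_Cons IH dhead_def dsum_def split: option.split)
qed (simp_all add: dcoef_short)

lemma dterms_words:
  "(v, e) \<in> set (dterms w) \<Longrightarrow> composable w \<Longrightarrow> length v + 1 = length w \<and> walen v = walen w
   \<and> composable v \<and> v \<noteq> [] \<and> lidem (hd v) = lidem (hd w)"
proof (induction w arbitrary: v e rule: dterms.induct)
  case (1 x y r)
  have xy: "ridem x = lidem y" and yr: "composable (y # r)"
    using "1.prems"(2) by (simp_all add: composable_Cons)
  from "1.prems"(1) consider (head) c where "lmult x y = Some c" "v = c # r"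
    | (later) v' e' where "(v', e') \<in> set (dterms (y # r))" "v = x # v'"
    by (cases "lmult x y") fastforce+
  then show ?case
  proof cases
    case head
    then show ?thesis using lmult_SomeD[OF head(1)] yr by (auto simp: composable_Cons)
  next
    case later
    then show ?thesis using "1.IH"[OF later(1) yr] xy by (auto simp: composable_Cons)
  qed
qed auto

lemma dcoef_nonzero_dterms: "(dcoef w u :: 'k::field) \<noteq> 0 \<Longrightarrow> \<exists>e. (u, e) \<in> set (dterms w)"
proof -
  have "dsum ts u \<noteq> (0::'k) \<Longrightarrow> \<exists>e. (u, e) \<in> set ts" for ts
    by (induction ts) (auto simp: dsum_def split: if_splits)
  then show "dcoef w u \<noteq> (0::'k) \<Longrightarrow> ?thesis" by (simp add: dcoef_dterms)
qed

definition dpair :: "(letter list \<times> int) list \<Rightarrow> (letter list \<Rightarrow> 'k::field) \<Rightarrow> 'k" where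
  "dpair ts G = sum_list (map (\<lambda>(v, e). of_int e * G v) ts)"

lemma dpair_append[simp]: "dpair (ts @ ts') G = dpair ts G + dpair ts' G"
  by (simp add: dpair_def)

lemma dpair_diff: "dpair ts (\<lambda>v. F v - G v) = dpair ts F - dpair ts G"
  by (induction ts) (auto simp: dpair_def algebra_simps)

lemma dpair_prefix:
  "dpair (map (\<lambda>(v, e). (x # v, - e)) ts) G = - dpair ts (\<lambda>v. G (x # v))"
  by (induction ts) (auto simp: dpair_def)

lemma dpair_prefixed:
  "dpair ts (\<lambda>v. prefixed x (dcoef v) u) = prefixed x (\<lambda>u'. dpair ts (\<lambda>v. dcoef v u')) u"
  by (induction ts) (auto simp: dpair_def prefixed_def split: list.split)

text \<open>Contracting x with the first letter of the terms of d(y r): only the term y d(r) survives,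
  and only when x y is a loop c; it gives the terms c d(r).\<close>
lemma dpair_dhead:
  "dpair (dterms (y # r)) (\<lambda>v. dhead x v u :: 'k::field)
   = (case lmult x y of Some c \<Rightarrow> prefixed c (dcoef r) u | None \<Rightarrow> 0)"
proof (cases r)
  case Nil then show ?thesis by (simp add: dpair_def prefixed_def split: option.split list.split)
next
  case (Cons z r')
  have head: "dpair (case lmult y z of Some c \<Rightarrow> [(c # r', -1)] | None \<Rightarrow> [])
      (\<lambda>v. dhead x v u :: 'k) = 0"
    by (cases "lmult y z") (auto simp: dpair_def dhead_def dest!: lmult_SomeD)
  have "dpair ts (\<lambda>v. dhead x (y # v) u :: 'k)
      = (case lmult x y of Some c \<Rightarrow> - prefixed c (dsum ts) u | None \<Rightarrow> 0)" for ts
    by (induction ts) (auto simp: dpair_def dhead_def dsum_def prefixed_def split: option.split list.split)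
  then show ?thesis
    unfolding Cons dterms.simps(1)[of y z r'] dpair_append dpair_prefix head
    by (auto simp: dcoef_dterms[abs_def] split: option.split)
qed

text \<open>d o d = 0 on a single word: all pairs of contractions cancel (triple products vanish).\<close>
lemma dpair_dterms_dcoef: "dpair (dterms w) (\<lambda>v. dcoef v u :: 'k::field) = 0"
proof (induction w arbitrary: u rule: dterms.induct)
  case (1 x y r)
  have head: "dpair (case lmult x y of Some c \<Rightarrow> [(c # r, -1)] | None \<Rightarrow> []) (\<lambda>v. dcoef v u :: 'k)
      = (case lmult x y of Some c \<Rightarrow> prefixed c (dcoef r) u | None \<Rightarrow> 0)"
    by (cases "lmult x y") (auto simp: dpair_def dcoef_Cons dest!: lmult_SomeD)
  have IH: "(\<lambda>u'. dpair (dterms (y # r)) (\<lambda>v. dcoef v u' :: 'k)) = (\<lambda>_. 0)"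
    using "1.IH" by (simp add: fun_eq_iff)
  have "dpair (dterms (y # r)) (\<lambda>v. dcoef (x # v) u :: 'k)
      = dpair (dterms (y # r)) (\<lambda>v. dhead x v u) - dpair (dterms (y # r)) (\<lambda>v. prefixed x (dcoef v) u)"
    by (simp add: dcoef_Cons dpair_diff)
  also have "\<dots> = (case lmult x y of Some c \<Rightarrow> prefixed c (dcoef r) u | None \<Rightarrow> 0)"
    by (simp add: dpair_dhead dpair_prefixed IH)
  finally show ?case
    unfolding dterms.simps(1) dpair_append dpair_prefix head by simp
qed (simp_all add: dpair_def)

section \<open>The complexes G(s,L)\<close>

definition gwords :: "idem \<Rightarrow> nat \<Rightarrow> nat \<Rightarrow> letter list set" where
  "gwords s L n = {w. length w = n \<and> composable w \<and> (w \<noteq> [] \<longrightarrow> lidem (hd w) = s) \<and> walen w = L}"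

definition gchains :: "idem \<Rightarrow> nat \<Rightarrow> nat \<Rightarrow> (letter list \<Rightarrow> 'k::field) set" where
  "gchains s L n = {f. \<forall>w. f w \<noteq> 0 \<longrightarrow> w \<in> gwords s L n}"

lemma gchains_iff: "f \<in> gchains s L n \<longleftrightarrow> (\<forall>w. w \<notin> gwords s L n \<longrightarrow> f w = 0)"
  by (auto simp: gchains_def)

definition gdif :: "idem \<Rightarrow> nat \<Rightarrow> nat \<Rightarrow> (letter list \<Rightarrow> 'k::field) \<Rightarrow> (letter list \<Rightarrow> 'k)" where
  "gdif s L n f = (\<lambda>u. \<Sum>w\<in>gwords s L n. f w * dcoef w u)"

definition gcycles :: "idem \<Rightarrow> nat \<Rightarrow> nat \<Rightarrow> (letter list \<Rightarrow> 'k::field) set" where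
  "gcycles s L n = {f \<in> gchains s L n. gdif s L n f = 0}"

definition gbounds :: "idem \<Rightarrow> nat \<Rightarrow> nat \<Rightarrow> (letter list \<Rightarrow> 'k::field) set" where
  "gbounds s L n = gdif s L (Suc n) ` gchains s L (Suc n)"

text \<open>Words of C^(m)(theta) start at id_O and end at id_L: exactly those with 2m+1 arrows.\<close>
lemma cbasis_eq_gwords: "cbasis n m = gwords IdO (2 * m + 1) n"
proof (intro set_eqI iffI)
  fix w assume "w \<in> cbasis n m"
  then have w: "composable w" "w \<noteq> []" "lidem (hd w) = IdO" "ridem (last w) = IdL"
    "wdeg w = m" "length w = n"
    by (auto simp: cbasis_def)
  with composable_word_shape[OF w(1,2)] have "odd (walen w)" "walen w div 2 = m"
    by (auto split: if_splits)
  then have "walen w = 2 * m + 1" by presburger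
  with w show "w \<in> gwords IdO (2 * m + 1) n" by (auto simp: gwords_def)
next
  fix w assume w: "w \<in> gwords IdO (2 * m + 1) n"
  then have "w \<noteq> []" by (auto simp: gwords_def)
  with w composable_word_shape[of w] show "w \<in> cbasis n m" by (auto simp: gwords_def cbasis_def)
qed

lemma cycles_eq_gcycles: "(cycles n m :: (letter list \<Rightarrow> 'k::field) set) = gcycles IdO (2 * m + 1) n"
  by (simp add: cycles_def gcycles_def chains_def gchains_def dif_def gdif_def cbasis_eq_gwords)

lemma boundaries_eq_gbounds:
  "(boundaries n m :: (letter list \<Rightarrow> 'k::field) set) = gbounds IdO (2 * m + 1) n"
  by (simp add: boundaries_def gbounds_def chains_def gchains_def dif_def[abs_def]
      gdif_def[abs_def] cbasis_eq_gwords)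

lemma finite_gwords[simp]: "finite (gwords s L n)"
proof (rule finite_subset)
  show "gwords s L n \<subseteq> {w. set w \<subseteq> UNIV \<and> length w = n}" by (auto simp: gwords_def)
  have "finite (UNIV :: letter set)"
  proof (rule finite_subset)
    show "UNIV \<subseteq> {Theta, Eta, Xi, XiL}"
    proof
      fix x :: letter show "x \<in> {Theta, Eta, Xi, XiL}" by (cases x) auto
    qed
  qed simp
  then show "finite {w. set w \<subseteq> (UNIV :: letter set) \<and> length w = n}"
    by (rule finite_lists_length_eq)
qed

lemma gwords_empty: assumes "n > L \<or> L > 2 * n" shows "gwords s L n = {}"
proof -
  have False if "w \<in> gwords s L n" for w
    using that walen_bounds[of w] assms by (auto simp: gwords_def)
  then show ?thesis by blast
qed

lemma dterms_gwords: "w \<in> gwords s L (Suc n) \<Longrightarrow> (v, e) \<in> set (dterms w) \<Longrightarrow> v \<in> gwords s L n"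
  using dterms_words[of v e w] by (auto simp: gwords_def)

lemma gdif_gchains: "gdif s L (Suc n) f \<in> gchains s L n"
  unfolding gchains_iff
proof (intro allI impI)
  fix u assume u: "u \<notin> gwords s L n"
  have "dcoef w u = (0::'a)" if "w \<in> gwords s L (Suc n)" for w
    using that u dcoef_nonzero_dterms dterms_gwords by metis
  then show "gdif s L (Suc n) f u = 0" by (simp add: gdif_def)
qed

lemma sum_dsum_dpair:
  assumes "finite V" "\<forall>(v, e) \<in> set ts. v \<in> V"
  shows "(\<Sum>v\<in>V. dsum ts v * G v) = dpair ts (G :: _ \<Rightarrow> 'k::field)"
  using assms(2)
proof (induction ts)
  case Nil then show ?case by (simp add: dpair_def)
next
  case (Cons t ts)
  obtain v0 e0 where t: "t = (v0, e0)" by force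
  have "(\<Sum>v\<in>V. dsum (t # ts) v * G v)
      = (\<Sum>v\<in>V. (if v0 = v then of_int e0 * G v else 0) + dsum ts v * G v)"
    by (rule sum.cong) (auto simp: t dsum_def algebra_simps)
  also have "\<dots> = (\<Sum>v\<in>V. (if v0 = v then of_int e0 * G v else 0)) + (\<Sum>v\<in>V. dsum ts v * G v)"
    by (rule sum.distrib)
  also have "\<dots> = dpair (t # ts) G" using Cons assms(1) by (simp add: t dpair_def)
  finally show ?case .
qed

lemma gdif_gdif: "gdif s L n (gdif s L (Suc n) f) = (0 :: letter list \<Rightarrow> 'k::field)"
proof
  fix u
  have "gdif s L n (gdif s L (Suc n) f) u
      = (\<Sum>w\<in>gwords s L (Suc n). f w * (\<Sum>v\<in>gwords s L n. dcoef w v * dcoef v u))"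
    by (simp add: gdif_def sum_distrib_right sum_distrib_left mult.assoc sum.swap[of _ "gwords s L n"])
  also have "\<dots> = 0"
  proof (rule sum.neutral, intro ballI)
    fix w assume w: "w \<in> gwords s L (Suc n)"
    have "(\<Sum>v\<in>gwords s L n. dcoef w v * (dcoef v u :: 'k)) = dpair (dterms w) (\<lambda>v. dcoef v u)"
      unfolding dcoef_dterms[of w] by (rule sum_dsum_dpair) (use w dterms_gwords in auto)
    then show "f w * (\<Sum>v\<in>gwords s L n. dcoef w v * dcoef v u) = 0"
      by (simp add: dpair_dterms_dcoef)
  qed
  finally show "gdif s L n (gdif s L (Suc n) f) u = 0 u" by simp
qed

lemma gdif_add: "gdif s L n (f + g) = gdif s L n f + (gdif s L n g :: _ \<Rightarrow> 'k::field)"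
  by (simp add: gdif_def fun_eq_iff sum.distrib algebra_simps)
lemma gdif_diff: "gdif s L n (f - g) = gdif s L n f - (gdif s L n g :: _ \<Rightarrow> 'k::field)"
  by (simp add: gdif_def fun_eq_iff sum_subtractf algebra_simps)
lemma gdif_uminus: "gdif s L n (- f) = - (gdif s L n f :: _ \<Rightarrow> 'k::field)"
  by (simp add: gdif_def fun_eq_iff sum_negf)
lemma gdif_scale: "gdif s L n (fscale c f) = fscale c (gdif s L n f :: _ \<Rightarrow> 'k::field)"
  by (simp add: gdif_def fscale_def fun_eq_iff sum_distrib_left algebra_simps)
lemma gdif_zero[simp]: "gdif s L n 0 = (0 :: _ \<Rightarrow> 'k::field)"
  by (simp add: gdif_def fun_eq_iff)

lemma gchains_zero[simp]: "0 \<in> gchains s L n" by (simp add: gchains_def)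
lemma gchains_add: "f \<in> gchains s L n \<Longrightarrow> g \<in> gchains s L n \<Longrightarrow> f + g \<in> gchains s L n"
  by (simp add: gchains_iff)
lemma gchains_diff: "f \<in> gchains s L n \<Longrightarrow> g \<in> gchains s L n \<Longrightarrow> f - g \<in> gchains s L n"
  by (simp add: gchains_iff)
lemma gchains_uminus: "f \<in> gchains s L n \<Longrightarrow> - f \<in> gchains s L n"
  by (simp add: gchains_def)
lemma gchains_scale: "f \<in> gchains s L n \<Longrightarrow> fscale c f \<in> gchains s L n"
  by (simp add: gchains_def fscale_def)

lemma gbounds_subset_gcycles: "gbounds s L n \<subseteq> gcycles s L n"
  by (auto simp: gbounds_def gcycles_def gdif_gchains gdif_gdif)
lemma gbounds_zero: "0 \<in> gbounds s L n"
  unfolding gbounds_def by (rule image_eqI[of _ _ 0]) simp_all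
lemma gbounds_add: "b \<in> gbounds s L n \<Longrightarrow> b' \<in> gbounds s L n \<Longrightarrow> b + b' \<in> gbounds s L n"
  unfolding gbounds_def by (auto simp: gdif_add[symmetric] intro!: gchains_add)
lemma gbounds_scale: "b \<in> gbounds s L n \<Longrightarrow> fscale c b \<in> gbounds s L n"
  unfolding gbounds_def by (auto simp: gdif_scale[symmetric] intro!: gchains_scale)

section \<open>Reduction of G(s,L) to G(opp s, L-3)\<close>

lemma loop_word_iff:
  "loop s # r \<in> gwords s L n \<longleftrightarrow> 1 \<le> n \<and> 2 \<le> L \<and> r \<in> gwords s (L - 2) (n - 1)"
  by (auto simp: gwords_def composable_Cons)
lemma arrows_word_iff:
  "arrow s # arrow (opp s) # r \<in> gwords s L n \<longleftrightarrow> 2 \<le> n \<and> 2 \<le> L \<and> r \<in> gwords s (L - 2) (n - 2)"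
  by (auto simp: gwords_def composable_Cons)
lemma arrow_loop_word_iff:
  "arrow s # loop (opp s) # r \<in> gwords s L n \<longleftrightarrow> 2 \<le> n \<and> 3 \<le> L \<and> r \<in> gwords (opp s) (L - 3) (n - 2)"
  by (auto simp: gwords_def composable_Cons)

lemma gwords_head_cases:
  assumes "w \<in> gwords s L n" "3 \<le> L"
  obtains r where "w = loop s # r" | r where "w = arrow s # arrow (opp s) # r"
    | r where "w = arrow s # loop (opp s) # r"
proof -
  from assms obtain x w' where w: "w = x # w'" "lidem x = s" "composable (x # w')" "walen (x # w') = L"
    by (cases w) (auto simp: gwords_def)
  from letter_at[OF w(2)] show thesis
  proof
    assume x: "x = arrow s"
    with w assms obtain y r where "w' = y # r" by (cases w') auto
    moreover from this w x have "lidem y = opp s" by (auto simp: composable_Cons)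
    ultimately show thesis using that w x letter_at[of y "opp s"] by blast
  qed (use that w in blast)
qed

lemma sum_gwords_split:
  assumes "3 \<le> L" "2 \<le> n"
  shows "(\<Sum>w\<in>gwords s L n. F w) = (\<Sum>r\<in>gwords s (L - 2) (n - 1). F (loop s # r))
     + (\<Sum>r\<in>gwords s (L - 2) (n - 2). F (arrow s # arrow (opp s) # r))
     + (\<Sum>r\<in>gwords (opp s) (L - 3) (n - 2). F (arrow s # loop (opp s) # r))"
proof -
  let ?A1 = "Cons (loop s) ` gwords s (L - 2) (n - 1)"
  let ?A2 = "(\<lambda>r. arrow s # arrow (opp s) # r) ` gwords s (L - 2) (n - 2)"
  let ?A3 = "(\<lambda>r. arrow s # loop (opp s) # r) ` gwords (opp s) (L - 3) (n - 2)"
  have "gwords s L n = ?A1 \<union> ?A2 \<union> ?A3"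
  proof
    show "gwords s L n \<subseteq> ?A1 \<union> ?A2 \<union> ?A3"
    proof
      fix w assume w: "w \<in> gwords s L n"
      from w assms(1) show "w \<in> ?A1 \<union> ?A2 \<union> ?A3"
        by (rule gwords_head_cases) (use w in \<open>auto simp: loop_word_iff arrows_word_iff arrow_loop_word_iff\<close>)
    qed
    show "?A1 \<union> ?A2 \<union> ?A3 \<subseteq> gwords s L n"
      using assms by (auto simp: loop_word_iff arrows_word_iff arrow_loop_word_iff)
  qed
  then have "(\<Sum>w\<in>gwords s L n. F w) = sum F ?A1 + sum F ?A2 + sum F ?A3"
    by (simp, subst sum.union_disjoint; (auto)?)+
  also have "\<dots> = (\<Sum>r\<in>gwords s (L - 2) (n - 1). F (loop s # r))
     + (\<Sum>r\<in>gwords s (L - 2) (n - 2). F (arrow s # arrow (opp s) # r))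
     + (\<Sum>r\<in>gwords (opp s) (L - 3) (n - 2). F (arrow s # loop (opp s) # r))"
    by (simp add: sum.reindex inj_on_def)
  finally show ?thesis .
qed

definition loop_part :: "idem \<Rightarrow> (letter list \<Rightarrow> 'k::field) \<Rightarrow> letter list \<Rightarrow> 'k" where
  "loop_part s F = (\<lambda>r. F (loop s # r))"

definition pair_emb :: "idem \<Rightarrow> (letter list \<Rightarrow> 'k::field) \<Rightarrow> letter list \<Rightarrow> 'k" where
  "pair_emb s \<rho> = (\<lambda>w. case w of x # y # r \<Rightarrow>
      if x = arrow s \<and> y = arrow (opp s) then \<rho> r else 0 | _ \<Rightarrow> 0)"

definition shift_emb :: "idem \<Rightarrow> (letter list \<Rightarrow> 'k::field) \<Rightarrow> letter list \<Rightarrow> 'k" where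
  "shift_emb s \<rho> = (\<lambda>w. case w of x # y # r \<Rightarrow>
      if x = arrow s \<and> y = loop (opp s) then \<rho> r else 0 | _ \<Rightarrow> 0)"

lemma loop_part_apply[simp]: "loop_part s F r = F (loop s # r)" by (simp add: loop_part_def)

lemma pair_emb_simps[simp]: "pair_emb s \<rho> (loop s # r) = 0"
  "pair_emb s \<rho> (arrow s # arrow (opp s) # r) = \<rho> r" "pair_emb s \<rho> (arrow s # loop (opp s) # r) = 0"
  by (simp_all add: pair_emb_def split: list.split)

lemma shift_emb_simps[simp]: "shift_emb s \<rho> (loop s # r) = 0"
  "shift_emb s \<rho> (arrow s # arrow (opp s) # r) = 0" "shift_emb s \<rho> (arrow s # loop (opp s) # r) = \<rho> r"
  by (simp_all add: shift_emb_def split: list.split)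

lemma loop_part_gchains: "F \<in> gchains s L n \<Longrightarrow> loop_part s F \<in> gchains s (L - 2) (n - 1)"
  by (auto simp: gchains_iff loop_word_iff)
lemma pair_emb_gchains:
  "\<rho> \<in> gchains s (L - 2) (n - 2) \<Longrightarrow> 2 \<le> n \<Longrightarrow> 2 \<le> L \<Longrightarrow> pair_emb s \<rho> \<in> gchains s L n"
  by (auto simp: gchains_iff pair_emb_def arrows_word_iff split: list.split)
lemma shift_emb_gchains:
  "\<rho> \<in> gchains (opp s) (L - 3) (n - 2) \<Longrightarrow> 2 \<le> n \<Longrightarrow> 3 \<le> L \<Longrightarrow> shift_emb s \<rho> \<in> gchains s L n"
  by (auto simp: gchains_iff shift_emb_def arrow_loop_word_iff split: list.split)
lemma shift_part_gchains:
  "F \<in> gchains s L n \<Longrightarrow> (\<lambda>r. F (arrow s # loop (opp s) # r)) \<in> gchains (opp s) (L - 3) (n - 2)"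
  by (auto simp: gchains_iff arrow_loop_word_iff)

lemma shift_emb_inj: "shift_emb s f = shift_emb s g \<Longrightarrow> f = g"
  by (metis ext shift_emb_simps(3))
lemma shift_emb_add: "shift_emb s (f + g) = shift_emb s f + shift_emb s g"
  by (auto simp: shift_emb_def fun_eq_iff split: list.split)
lemma shift_emb_scale: "shift_emb s (fscale c f) = fscale c (shift_emb s f)"
  by (auto simp: shift_emb_def fun_eq_iff fscale_def split: list.split)
lemma shift_emb_zero[simp]: "shift_emb s 0 = 0"
  by (auto simp: shift_emb_def fun_eq_iff split: list.split)

lemma dcoef_arrows_loop:
  "(dcoef (arrow s # arrow (opp s) # r') (loop s # r) :: 'k::field) = (if r' = r then -1 else 0)"
  by (auto simp: dcoef_Cons dhead_def prefixed_def)
lemma dcoef_arrow_loop_loop: "(dcoef (arrow s # loop (opp s) # r') (loop s # r) :: 'k::field) = 0"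
  by (auto simp: dcoef_Cons dhead_def prefixed_def)
lemma dcoef_arrows_arrows:
  "(dcoef (arrow s # arrow (opp s) # r') (arrow s # arrow (opp s) # r) :: 'k::field) = dcoef r' r"
  by (simp add: dcoef_same_head)
lemma dcoef_arrow_loop:
  "(dcoef (arrow s # loop (opp s) # r) u :: 'k::field) = shift_emb s (dcoef r) u"
  by (auto simp: dcoef_Cons dhead_def prefixed_def shift_emb_def split: list.split)

lemma gdif_at_loop:
  assumes F: "F \<in> gchains s L n" and "3 \<le> L" "2 \<le> n"
  shows "gdif s L n F (loop s # r)
    = - gdif s (L - 2) (n - 1) (loop_part s F) r - F (arrow s # arrow (opp s) # r)"
proof -
  have "(\<Sum>r'\<in>gwords s (L - 2) (n - 2).
      F (arrow s # arrow (opp s) # r') * dcoef (arrow s # arrow (opp s) # r') (loop s # r))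
    = (\<Sum>r'\<in>gwords s (L - 2) (n - 2). if r' = r then - F (arrow s # arrow (opp s) # r') else 0)"
    by (rule sum.cong) (auto simp: dcoef_arrows_loop)
  also have "\<dots> = - F (arrow s # arrow (opp s) # r)"
    using F assms by (auto simp: gchains_iff arrows_word_iff)
  finally show ?thesis
    unfolding gdif_def sum_gwords_split[OF assms(2,3)]
    by (simp add: dcoef_same_head dcoef_arrow_loop_loop sum_negf)
qed

lemma gdif_pair_emb_loop:
  assumes "\<rho> \<in> gchains s (L - 2) (n - 2)" "3 \<le> L" "2 \<le> n"
  shows "gdif s L n (pair_emb s \<rho>) (loop s # r) = - \<rho> r"
proof -
  have "loop_part s (pair_emb s \<rho>) = 0" by (simp add: fun_eq_iff)
  then show ?thesis using gdif_at_loop[OF pair_emb_gchains[OF assms(1,3)] assms(2,3)] assms by simp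
qed

lemma gdif_pair_emb_arrows:
  assumes "3 \<le> L" "2 \<le> n"
  shows "gdif s L n (pair_emb s \<rho>) (arrow s # arrow (opp s) # r) = gdif s (L - 2) (n - 2) \<rho> r"
  unfolding gdif_def sum_gwords_split[OF assms] by (simp add: dcoef_arrows_arrows)

lemma gdif_shift_emb:
  assumes "3 \<le> L" "2 \<le> n"
  shows "gdif s L n (shift_emb s \<rho>) = shift_emb s (gdif (opp s) (L - 3) (n - 2) \<rho>)"
proof
  fix u
  have "gdif s L n (shift_emb s \<rho>) u
      = (\<Sum>r'\<in>gwords (opp s) (L - 3) (n - 2). \<rho> r' * shift_emb s (dcoef r') u)"
    unfolding gdif_def sum_gwords_split[OF assms] by (simp add: dcoef_arrow_loop)
  also have "\<dots> = shift_emb s (gdif (opp s) (L - 3) (n - 2) \<rho>) u"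
    by (auto simp: shift_emb_def gdif_def split: list.split)
  finally show "gdif s L n (shift_emb s \<rho>) u = shift_emb s (gdif (opp s) (L - 3) (n - 2) \<rho>) u" .
qed

lemma chain_eq_shift_emb:
  assumes F: "F \<in> gchains s L n" and "3 \<le> L"
    and loop0: "\<And>r. F (loop s # r) = 0" and arrows0: "\<And>r. F (arrow s # arrow (opp s) # r) = 0"
  shows "F = shift_emb s (\<lambda>r. F (arrow s # loop (opp s) # r))"
proof
  fix w
  show "F w = shift_emb s (\<lambda>r. F (arrow s # loop (opp s) # r)) w"
  proof (cases "\<exists>r. w = arrow s # loop (opp s) # r")
    case True then show ?thesis by auto
  next
    case False
    have "F w = 0"
    proof (cases "w \<in> gwords s L n")
      case True
      from this assms(2) show ?thesis
        by (rule gwords_head_cases) (use False loop0 arrows0 in auto)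
    qed (use F in \<open>simp add: gchains_iff\<close>)
    moreover have "shift_emb s (\<lambda>r. F (arrow s # loop (opp s) # r)) w = 0"
      using False by (auto simp: shift_emb_def split: list.split)
    ultimately show ?thesis by simp
  qed
qed

text \<open>A chain whose boundary vanishes on the loop words is a shifted chain up to a boundary:
  subtract the boundary of the pair extension of minus its loop part.\<close>
lemma chain_normal_form:
  assumes F: "F \<in> gchains s L n" and L: "3 \<le> L" and n: "2 \<le> n"
    and dF: "\<And>r. gdif s L n F (loop s # r) = 0"
  obtains g F' where "g \<in> gchains s L (Suc n)" "F' \<in> gchains (opp s) (L - 3) (n - 2)"
    "F = gdif s L (Suc n) g + shift_emb s F'"
proof -
  define \<rho> where "\<rho> = - loop_part s F"
  have \<rho>: "\<rho> \<in> gchains s (L - 2) (Suc n - 2)"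
    using gchains_uminus[OF loop_part_gchains[OF F]] n by (simp add: \<rho>_def)
  define g where "g = pair_emb s \<rho>"
  have g: "g \<in> gchains s L (Suc n)" unfolding g_def using pair_emb_gchains[OF \<rho>] L n by simp
  define h where "h = F - gdif s L (Suc n) g"
  have h: "h \<in> gchains s L n" unfolding h_def by (rule gchains_diff[OF F gdif_gchains])
  have loop0: "h (loop s # r) = 0" for r
    using gdif_pair_emb_loop[OF \<rho> L] n by (simp add: h_def g_def \<rho>_def)
  have arrows0: "h (arrow s # arrow (opp s) # r) = 0" for r
  proof -
    have "F (arrow s # arrow (opp s) # r) = - gdif s (L - 2) (n - 1) (loop_part s F) r"
      using gdif_at_loop[OF F L n, of r] dF[of r] by simp
    moreover have "gdif s L (Suc n) g (arrow s # arrow (opp s) # r) = gdif s (L - 2) (n - 1) \<rho> r"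
      using gdif_pair_emb_arrows[of L "Suc n" s \<rho> r] L n by (simp add: g_def)
    ultimately show ?thesis by (simp add: h_def \<rho>_def gdif_uminus)
  qed
  have "F = gdif s L (Suc n) g + h" by (simp add: h_def)
  also have "h = shift_emb s (\<lambda>r. h (arrow s # loop (opp s) # r))"
    by (rule chain_eq_shift_emb[OF h L loop0 arrows0])
  finally show thesis using that g shift_part_gchains[OF h] by blast
qed

lemma cycle_decomposition:
  assumes f: "f \<in> gcycles s L n" and L: "3 \<le> L" and n: "2 \<le> n"
  obtains b f' where "b \<in> gbounds s L n" "f' \<in> gcycles (opp s) (L - 3) (n - 2)"
    "f = b + shift_emb s f'"
proof -
  have fc: "f \<in> gchains s L n" and df: "gdif s L n f = 0" using f by (auto simp: gcycles_def)
  obtain g f' where g: "g \<in> gchains s L (Suc n)" and f': "f' \<in> gchains (opp s) (L - 3) (n - 2)"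
    and fe: "f = gdif s L (Suc n) g + shift_emb s f'"
    by (rule chain_normal_form[OF fc L n]) (simp add: df)
  have "shift_emb s (gdif (opp s) (L - 3) (n - 2) f') = gdif s L n (shift_emb s f')"
    by (rule gdif_shift_emb[OF L n, symmetric])
  also have "\<dots> = gdif s L n (f - gdif s L (Suc n) g)" using fe by simp
  also have "\<dots> = 0" using df by (simp add: gdif_diff gdif_gdif)
  finally have "gdif (opp s) (L - 3) (n - 2) f' = 0" using shift_emb_inj[of s _ 0] by simp
  with f' have "f' \<in> gcycles (opp s) (L - 3) (n - 2)" by (simp add: gcycles_def)
  moreover have "gdif s L (Suc n) g \<in> gbounds s L n" using g by (simp add: gbounds_def)
  ultimately show thesis using that fe by blast
qed

lemma shift_emb_gbounds_reflect:
  assumes g: "g \<in> gchains s L (Suc n)" and dg: "gdif s L (Suc n) g = shift_emb s z"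
    and L: "3 \<le> L" and n: "2 \<le> n"
  shows "z \<in> gbounds (opp s) (L - 3) (n - 2)"
proof -
  have n': "Suc n - 2 = Suc (n - 2)" using n by simp
  obtain h g' where g': "g' \<in> gchains (opp s) (L - 3) (Suc (n - 2))"
    and ge: "g = gdif s L (Suc (Suc n)) h + shift_emb s g'"
    by (rule chain_normal_form[OF g L]) (use n dg n' in simp_all)
  have "shift_emb s z = gdif s L (Suc n) (shift_emb s g')" using dg ge by (simp add: gdif_add gdif_gdif)
  also have "\<dots> = shift_emb s (gdif (opp s) (L - 3) (Suc (n - 2)) g')"
    using gdif_shift_emb[of L "Suc n" s g'] L n n' by simp
  finally have "z = gdif (opp s) (L - 3) (Suc (n - 2)) g'" by (rule shift_emb_inj)
  with g' show ?thesis by (simp add: gbounds_def)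
qed

lemma shift_emb_gbounds:
  assumes b: "b \<in> gbounds (opp s) (L - 3) (n - 2)" and L: "3 \<le> L" and n: "2 \<le> n"
  shows "shift_emb s b \<in> gbounds s L n"
proof -
  have n': "Suc n - 2 = Suc (n - 2)" using n by simp
  from b obtain g where g: "g \<in> gchains (opp s) (L - 3) (Suc (n - 2))"
    and bg: "b = gdif (opp s) (L - 3) (Suc (n - 2)) g"
    by (auto simp: gbounds_def)
  have "shift_emb s g \<in> gchains s L (Suc n)" using shift_emb_gchains[of g s L "Suc n"] g L n n' by simp
  moreover have "gdif s L (Suc n) (shift_emb s g) = shift_emb s b"
    using gdif_shift_emb[of L "Suc n" s g] L n n' bg by simp
  ultimately show ?thesis unfolding gbounds_def by (metis image_eqI)
qed

section \<open>Classification of the homology of G(s,L)\<close>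

text \<open>The two possible shapes of H_n(G(s,L)): zero, or spanned by the class of one cycle z.\<close>
definition exact_at :: "'k::field itself \<Rightarrow> idem \<Rightarrow> nat \<Rightarrow> nat \<Rightarrow> bool" where
  "exact_at _ s L n \<longleftrightarrow> (gcycles s L n :: (letter list \<Rightarrow> 'k) set) \<subseteq> gbounds s L n"

definition line_homology :: "'k::field itself \<Rightarrow> idem \<Rightarrow> nat \<Rightarrow> nat \<Rightarrow> bool" where
  "line_homology _ s L n \<longleftrightarrow> (\<exists>z::letter list \<Rightarrow> 'k. z \<in> gcycles s L n \<and> z \<notin> gbounds s L n \<and>
      gcycles s L n \<subseteq> {b + fscale c z | b c. b \<in> gbounds s L n})"

lemma exact_at_shift:
  assumes "exact_at TYPE('k::field) (opp s) (L - 3) (n - 2)" and L: "3 \<le> L" and n: "2 \<le> n"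
  shows "exact_at TYPE('k) s L n"
  unfolding exact_at_def
proof
  fix f :: "letter list \<Rightarrow> 'k" assume "f \<in> gcycles s L n"
  then obtain b f' where b: "b \<in> gbounds s L n" and f': "f' \<in> gcycles (opp s) (L - 3) (n - 2)"
    and fe: "f = b + shift_emb s f'"
    using cycle_decomposition L n by blast
  from f' assms(1) have "f' \<in> gbounds (opp s) (L - 3) (n - 2)" by (auto simp: exact_at_def)
  then have "shift_emb s f' \<in> gbounds s L n" using shift_emb_gbounds L n by blast
  then show "f \<in> gbounds s L n" using b fe gbounds_add by blast
qed

lemma line_homology_shift:
  assumes "line_homology TYPE('k::field) (opp s) (L - 3) (n - 2)" and L: "3 \<le> L" and n: "2 \<le> n"
  shows "line_homology TYPE('k) s L n"
proof -
  obtain z' :: "letter list \<Rightarrow> 'k" where z'c: "z' \<in> gcycles (opp s) (L - 3) (n - 2)"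
    and z'b: "z' \<notin> gbounds (opp s) (L - 3) (n - 2)"
    and z'span: "gcycles (opp s) (L - 3) (n - 2) \<subseteq> {b + fscale c z' | b c. b \<in> gbounds (opp s) (L - 3) (n - 2)}"
    using assms(1) by (auto simp: line_homology_def)
  define z where "z = shift_emb s z'"
  have "z \<in> gcycles s L n"
    using shift_emb_gchains[of z' s L n] gdif_shift_emb[OF L n, of s z'] z'c L n
    by (simp add: z_def gcycles_def)
  moreover have "z \<notin> gbounds s L n"
  proof
    assume "z \<in> gbounds s L n"
    then obtain g where "g \<in> gchains s L (Suc n)" "gdif s L (Suc n) g = shift_emb s z'"
      by (auto simp: gbounds_def z_def)
    with z'b show False using shift_emb_gbounds_reflect L n by blast
  qed
  moreover have "gcycles s L n \<subseteq> {b + fscale c z | b c. b \<in> gbounds s L n}"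
  proof
    fix f :: "letter list \<Rightarrow> 'k" assume "f \<in> gcycles s L n"
    then obtain b f' where b: "b \<in> gbounds s L n" and f': "f' \<in> gcycles (opp s) (L - 3) (n - 2)"
      and fe: "f = b + shift_emb s f'"
      using cycle_decomposition L n by blast
    from f' z'span obtain b' c where b': "b' \<in> gbounds (opp s) (L - 3) (n - 2)"
      and f'e: "f' = b' + fscale c z'" by blast
    have "b + shift_emb s b' \<in> gbounds s L n" using shift_emb_gbounds[OF b' L n] b gbounds_add by blast
    moreover have "f = (b + shift_emb s b') + fscale c z"
      using fe f'e by (simp add: shift_emb_add shift_emb_scale z_def add.assoc)
    ultimately show "f \<in> {b + fscale c z | b c. b \<in> gbounds s L n}" by blast
  qed
  ultimately show ?thesis by (auto simp: line_homology_def)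
qed

definition unit_chain :: "letter list \<Rightarrow> letter list \<Rightarrow> 'k::field" where
  "unit_chain w0 = (\<lambda>w. if w = w0 then 1 else 0)"

lemma exact_at_empty:
  assumes "gwords s L n = {}" shows "exact_at TYPE('k::field) s L n"
proof -
  have "gcycles s L n \<subseteq> {0 :: letter list \<Rightarrow> 'k}"
    using assms by (auto simp: gcycles_def gchains_def fun_eq_iff)
  then show ?thesis using gbounds_zero by (auto simp: exact_at_def)
qed

lemma line_homology_single:
  assumes G: "gwords s L n = {w0}" and G': "gwords s L (Suc n) = {}" and w0: "length w0 \<le> 1"
  shows "line_homology TYPE('k::field) s L n"
proof -
  have "gdif s L (Suc n) = (\<lambda>_. 0 :: letter list \<Rightarrow> 'k)" by (simp add: gdif_def G' fun_eq_iff)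
  then have bounds: "gbounds s L n = {0 :: letter list \<Rightarrow> 'k}"
    unfolding gbounds_def using gchains_zero by (auto simp: zero_fun_def)
  have cycles: "gcycles s L n = (gchains s L n :: (letter list \<Rightarrow> 'k) set)"
    using w0 by (simp add: gcycles_def gdif_def G dcoef_short fun_eq_iff zero_fun_def)
  have "(gcycles s L n :: (letter list \<Rightarrow> 'k) set)
      \<subseteq> {b + fscale c (unit_chain w0) | b c. b \<in> gbounds s L n}"
  proof
    fix f :: "letter list \<Rightarrow> 'k" assume "f \<in> gcycles s L n"
    then have "f = 0 + fscale (f w0) (unit_chain w0)"
      by (auto simp: cycles gchains_iff G fscale_def unit_chain_def fun_eq_iff)
    then show "f \<in> {b + fscale c (unit_chain w0) | b c. b \<in> gbounds s L n}" using bounds by blast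
  qed
  moreover have "(unit_chain w0 :: letter list \<Rightarrow> 'k) \<in> gcycles s L n - gbounds s L n"
    by (auto simp: cycles bounds gchains_def G unit_chain_def fun_eq_iff)
  ultimately show ?thesis unfolding line_homology_def by blast
qed

lemma gwords_one: "gwords s L (Suc 0) = {[x] | x. lidem x = s \<and> alen x = L}"
  by (auto simp: gwords_def length_Suc_conv)

lemma gwords_0_0: "gwords s 0 0 = {[]}"
  by (auto simp: gwords_def)
lemma gwords_1_1: "gwords s 1 (Suc 0) = {[arrow s]}"
  by (auto simp: gwords_one intro: arrow_of_alen)
lemma gwords_2_1: "gwords s 2 (Suc 0) = {[loop s]}"
  by (auto simp: gwords_one intro: loop_of_alen)
lemma gwords_2_2: "gwords s 2 2 = {[arrow s, arrow (opp s)]}"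
proof -
  have "w = [arrow s, arrow (opp s)]" if w: "w \<in> gwords s 2 2" for w
  proof -
    from w obtain x y where xy: "w = [x, y]" by (auto simp: gwords_def length_Suc_conv numeral_2_eq_2)
    with w have "lidem x = s" "lidem y = ridem x" "alen x + alen y = 2"
      by (auto simp: gwords_def composable_Cons)
    moreover from this have "alen x = 1" "alen y = 1" using alen_pos[of x] alen_pos[of y] by linarith+
    ultimately show ?thesis using xy arrow_of_alen[of x] arrow_of_alen[of y] by auto
  qed
  then show ?thesis by (auto simp: gwords_def composable_Cons)
qed

lemma dcoef_arrows: "(dcoef [arrow s, arrow (opp s)] u :: 'k::field) = - unit_chain [loop s] u"
  by (simp add: dcoef_Cons dhead_def unit_chain_def)

lemma exact_at_2_1: "exact_at TYPE('k::field) s 2 1"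
  unfolding exact_at_def
proof
  fix f :: "letter list \<Rightarrow> 'k" assume "f \<in> gcycles s 2 1"
  then have "\<forall>w. w \<noteq> [loop s] \<longrightarrow> f w = 0" by (simp add: gcycles_def gchains_iff gwords_2_1)
  then have f: "f = fscale (f [loop s]) (unit_chain [loop s])"
    by (auto simp: fscale_def unit_chain_def fun_eq_iff)
  define g :: "letter list \<Rightarrow> 'k" where
    "g = fscale (- f [loop s]) (unit_chain [arrow s, arrow (opp s)])"
  have "gdif s 2 2 g = fscale (f [loop s]) (unit_chain [loop s])"
    by (simp add: g_def gdif_def gwords_2_2 fscale_def unit_chain_def dcoef_arrows fun_eq_iff)
  moreover have "g \<in> gchains s 2 2"
    by (auto simp: g_def gchains_def fscale_def unit_chain_def gwords_2_2)
  ultimately show "f \<in> gbounds s 2 1" unfolding gbounds_def Suc_1 using f by (metis image_eqI)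
qed

lemma exact_at_2_2: "exact_at TYPE('k::field) s 2 2"
  unfolding exact_at_def
proof
  fix f :: "letter list \<Rightarrow> 'k" assume f: "f \<in> gcycles s 2 2"
  then have "gdif s 2 2 f [loop s] = 0" by (simp add: gcycles_def)
  then have "f [arrow s, arrow (opp s)] = 0" by (simp add: gdif_def gwords_2_2 dcoef_arrows unit_chain_def)
  moreover have "\<forall>w. w \<noteq> [arrow s, arrow (opp s)] \<longrightarrow> f w = 0"
    using f by (simp add: gcycles_def gchains_iff gwords_2_2)
  ultimately have "f = 0" unfolding fun_eq_iff zero_fun_def by metis
  then show "f \<in> gbounds s 2 2" using gbounds_zero by simp
qed

text \<open>The line 2L + (n mod 2) = 3n on which the homology of G(s,L) is concentrated.\<close>
definition critical :: "nat \<Rightarrow> nat \<Rightarrow> bool" where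
  "critical L n \<longleftrightarrow> 2 * L + n mod 2 = 3 * n"

lemma critical_shift: "3 \<le> L \<Longrightarrow> 2 \<le> n \<Longrightarrow> critical (L - 3) (n - 2) \<longleftrightarrow> critical L n"
  by (auto simp: critical_def le_iff_add mod2_eq_if)

lemma not_critical_out_of_range: "n > L \<or> L > 2 * n \<Longrightarrow> \<not> critical L n"
  using mod_less_divisor[of 2 n] by (auto simp: critical_def)

theorem homology_classification:
  "(critical L n \<longrightarrow> line_homology TYPE('k::field) s L n)
   \<and> (\<not> critical L n \<longrightarrow> exact_at TYPE('k) s L n)"
proof (induction n arbitrary: s L rule: less_induct)
  case (less n)
  consider (reduce) "3 \<le> L" "2 \<le> n" | (empty) "n > L \<or> L > 2 * n"
    | (n0) "n = 0" "L = 0" | (n1) "n = 1" "L = 1" | (n1') "n = 1" "L = 2" | (n2) "n = 2" "L = 2"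
    by linarith
  then show ?case
  proof cases
    case reduce
    then have "n - 2 < n" by simp
    from less[OF this, where s = "opp s" and L = "L - 3"] critical_shift[OF reduce]
      exact_at_shift[OF _ reduce] line_homology_shift[OF _ reduce]
    show ?thesis by blast
  next
    case empty
    then show ?thesis by (simp add: not_critical_out_of_range exact_at_empty gwords_empty)
  next
    case n0
    have "gwords s 0 (Suc 0) = {}" by (rule gwords_empty) simp
    then have "line_homology TYPE('k) s 0 0" by (rule line_homology_single[OF gwords_0_0]) simp
    with n0 show ?thesis by (simp add: critical_def)
  next
    case n1
    have "gwords s 1 (Suc (Suc 0)) = {}" by (rule gwords_empty) simp
    then have "line_homology TYPE('k) s 1 (Suc 0)" by (rule line_homology_single[OF gwords_1_1]) simp
    with n1 show ?thesis by (simp add: critical_def)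
  next
    case n1'
    with exact_at_2_1 show ?thesis by (simp add: critical_def)
  next
    case n2
    with exact_at_2_2 show ?thesis by (simp add: critical_def)
  qed
qed

section \<open>Dimension count\<close>

lemma (in vector_space) dim_extension_by_one:
  assumes "finite F" "S \<subseteq> span F" "x \<notin> span S" "insert x S \<subseteq> V" "V \<subseteq> span (insert x S)"
  shows "dim V = dim S + 1"
proof -
  obtain K where K: "K \<subseteq> S" "independent K" "S \<subseteq> span K" "card K = dim S"
    using basis_exists by blast
  have "finite K" using independent_span_bound[OF assms(1) K(2)] K(1) assms(2) by blast
  have "x \<notin> span K" using assms(3) span_mono[OF K(1)] by blast
  then have "x \<notin> K" using span_base by blast
  have "dim V = card (insert x K)"
  proof (rule dim_unique[OF _ _ _ refl])
    show "insert x K \<subseteq> V" using K(1) assms(4) by blast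
    have "insert x S \<subseteq> span (insert x K)"
      using K(3) span_mono[of K "insert x K"] span_base[of x "insert x K"] by blast
    then show "V \<subseteq> span (insert x K)" using assms(5) span_minimal[OF _ subspace_span] by blast
    show "independent (insert x K)" by (rule independent_insertI) fact+
  qed
  also have "\<dots> = dim S + 1" using \<open>finite K\<close> \<open>x \<notin> K\<close> K(4) by simp
  finally show ?thesis .
qed

lemma sum_fun_apply: "(\<Sum>w\<in>A. F w) u = (\<Sum>w\<in>A. F w u)" for F :: "_ \<Rightarrow> _ \<Rightarrow> 'k::field"
  by (induction A rule: infinite_finite_induct) auto

lemma gchains_span:
  "gchains s L n \<subseteq> module.span fscale (unit_chain ` gwords s L n :: (letter list \<Rightarrow> 'k::field) set)"
proof
  interpret V: vector_space "fscale :: 'k \<Rightarrow> (letter list \<Rightarrow> 'k) \<Rightarrow> _" by (rule vector_space_fscale)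
  fix f :: "letter list \<Rightarrow> 'k" assume f: "f \<in> gchains s L n"
  have "f = (\<Sum>w\<in>gwords s L n. fscale (f w) (unit_chain w))"
  proof
    fix u
    have "(\<Sum>w\<in>gwords s L n. fscale (f w) (unit_chain w)) u = (\<Sum>w\<in>gwords s L n. if w = u then f u else 0)"
      unfolding sum_fun_apply by (rule sum.cong) (auto simp: fscale_def unit_chain_def)
    also have "\<dots> = f u" using f by (auto simp: gchains_iff)
    finally show "f u = (\<Sum>w\<in>gwords s L n. fscale (f w) (unit_chain w)) u" by simp
  qed
  also have "\<dots> \<in> V.span (unit_chain ` gwords s L n)"
    by (intro V.span_sum V.span_scale V.span_base) auto
  finally show "f \<in> V.span (unit_chain ` gwords s L n)" .
qed

lemma exact_at_dim:
  assumes "exact_at TYPE('k::field) s L n"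
  shows "vector_space.dim (fscale :: 'k \<Rightarrow> _) (gcycles s L n :: (letter list \<Rightarrow> 'k) set)
    - vector_space.dim (fscale :: 'k \<Rightarrow> _) (gbounds s L n :: (letter list \<Rightarrow> 'k) set) = 0"
proof -
  have "(gcycles s L n :: (letter list \<Rightarrow> 'k) set) = gbounds s L n"
    using assms gbounds_subset_gcycles unfolding exact_at_def by (rule subset_antisym)
  then show ?thesis by simp
qed

lemma line_homology_dim:
  assumes "line_homology TYPE('k::field) s L n"
  shows "vector_space.dim (fscale :: 'k \<Rightarrow> _) (gcycles s L n :: (letter list \<Rightarrow> 'k) set)
    - vector_space.dim (fscale :: 'k \<Rightarrow> _) (gbounds s L n :: (letter list \<Rightarrow> 'k) set) = 1"
proof -
  interpret V: vector_space "fscale :: 'k \<Rightarrow> (letter list \<Rightarrow> 'k) \<Rightarrow> _" by (rule vector_space_fscale)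
  obtain z :: "letter list \<Rightarrow> 'k" where z: "z \<in> gcycles s L n" "z \<notin> gbounds s L n"
    and spanned: "gcycles s L n \<subseteq> {b + fscale c z | b c. b \<in> gbounds s L n}"
    using assms by (auto simp: line_homology_def)
  have "V.subspace (gbounds s L n :: (letter list \<Rightarrow> 'k) set)"
    unfolding V.subspace_def using gbounds_zero gbounds_add gbounds_scale by blast
  then have span_bounds: "V.span (gbounds s L n) = (gbounds s L n :: (letter list \<Rightarrow> 'k) set)"
    by (simp add: V.span_eq_iff)
  have "V.dim (gcycles s L n) = V.dim (gbounds s L n :: (letter list \<Rightarrow> 'k) set) + 1"
  proof (rule V.dim_extension_by_one)
    show "finite (unit_chain ` gwords s L n :: (letter list \<Rightarrow> 'k) set)" by simp
    show "gbounds s L n \<subseteq> V.span (unit_chain ` gwords s L n)"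
      using gbounds_subset_gcycles gchains_span by (fastforce simp: gcycles_def)
    show "z \<notin> V.span (gbounds s L n)" unfolding span_bounds by (rule z(2))
    show "insert z (gbounds s L n) \<subseteq> gcycles s L n" using z(1) gbounds_subset_gcycles by blast
    show "gcycles s L n \<subseteq> V.span (insert z (gbounds s L n))"
    proof
      fix f :: "letter list \<Rightarrow> 'k" assume "f \<in> gcycles s L n"
      with spanned obtain b c where "b \<in> gbounds s L n" "f = b + fscale c z" by blast
      then show "f \<in> V.span (insert z (gbounds s L n))"
        by (auto intro: V.span_add V.span_scale V.span_base)
    qed
  qed
  then show ?thesis by simp
qed

text \<open>The homology of C^(m)(theta) in degree n: that of G(id_O, 2m+1).\<close>
lemma homology_dim_formula:
  "homology_dim TYPE('k::field) n m = (if critical (2 * m + 1) n then 1 else 0)"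
  using homology_classification[where 'k = 'k, of "2 * m + 1" n IdO]
    exact_at_dim[where 'k = 'k] line_homology_dim[where 'k = 'k]
  by (auto simp: homology_dim_def cycles_eq_gcycles boundaries_eq_gbounds)

lemma critical_diagonal:
  assumes "1 \<le> t" "t \<le> n"
  shows "critical (2 * (n - t) + 1) n \<longleftrightarrow> n = 4 * t - 3 \<or> n = 4 * t - 2"
proof (cases "even n")
  case True
  then have "n mod 2 = 0" by simp
  then show ?thesis using assms True by (auto simp: critical_def)
next
  case False
  then have "n mod 2 = 1" by (simp add: odd_iff_mod_2_eq_one)
  then show ?thesis using assms False by (auto simp: critical_def)
qed

theorem mainTheorem7:
  assumes "CHAR('k::field) \<noteq> 2" and "CHAR('k) \<noteq> 3"
  shows "\<forall>n\<ge>1.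
      homology_dim TYPE('k) n (n - 1) = (if n \<in> {1, 2} then 1 else 0)
    \<and> (n \<ge> 2 \<longrightarrow> homology_dim TYPE('k) n (n - 2) = (if n \<in> {5, 6} then 1 else 0))
    \<and> (n \<ge> 3 \<longrightarrow> homology_dim TYPE('k) n (n - 3) = (if n \<in> {9, 10} then 1 else 0))
    \<and> (n \<ge> 4 \<longrightarrow> homology_dim TYPE('k) n (n - 4) = (if n \<in> {13, 14} then 1 else 0))"
proof -
  have diagonal: "homology_dim TYPE('k) n (n - t) = (if n = 4 * t - 3 \<or> n = 4 * t - 2 then 1 else 0)"
    if "1 \<le> t" "t \<le> n" for n t
    using homology_dim_formula[where 'k = 'k, of n "n - t"] critical_diagonal[OF that] by simp
  show ?thesis by (intro allI impI conjI) (simp_all add: diagonal)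
qed

end
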